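(* For integers $n>1$ and even $m>3$, $\chi_{ld}(W_m[\overline{K_{n}}])=3$.
   Context: All graphs are finite, simple and undirected. For a graph $G=(V,E)$ of order $N$ without isolated vertices, a bijection $f\colon V\to\{1,2,\dots,N\}$ is a local distance antimagic labeling if $w(u)\neq w(v)$ for every edge $uv$, where $w(u)=\sum_{x\in N(u)}f(x)$ and $N(u)$ is the open neighborhood of $u$. $\chi_{ld}(G)$ is the minimum number of distinct weights over all local distance antimagic labelings of $G$. The wheel $W_m=C_m+K_1$ is the cycle $C_m$ together with a central vertex adjacent to all cycle vertices. $\overline{K_n}$ is the edgeless graph on $n$ vertices. The lexicographic product $G[H]$ has vertex set $V(G)\times V(H)$, with $(g,h)$ adjacent to $(g',h')$ iff $gg'\in E(G)$, or $g=g'$ and $hh'\in E(H)$. *)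

theory Defs
  imports Main
begin

text \<open>A finite simple graph is given by a vertex set V and a symmetric,
irreflexive adjacency relation adj (only its restriction to V matters).\<close>

definition nbhd :: "'a set \<Rightarrow> ('a \<Rightarrow> 'a \<Rightarrow> bool) \<Rightarrow> 'a \<Rightarrow> 'a set" where
  "nbhd V adj u = {x \<in> V. adj u x}"

definition vweight :: "'a set \<Rightarrow> ('a \<Rightarrow> 'a \<Rightarrow> bool) \<Rightarrow> ('a \<Rightarrow> nat) \<Rightarrow> 'a \<Rightarrow> nat" where
  "vweight V adj f u = (\<Sum>x\<in>nbhd V adj u. f x)"

definition local_dist_antimagic :: "'a set \<Rightarrow> ('a \<Rightarrow> 'a \<Rightarrow> bool) \<Rightarrow> ('a \<Rightarrow> nat) \<Rightarrow> bool" where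
  "local_dist_antimagic V adj f \<longleftrightarrow>
     bij_betw f V {1..card V} \<and>
     (\<forall>u\<in>V. \<forall>v\<in>V. adj u v \<longrightarrow> vweight V adj f u \<noteq> vweight V adj f v)"

definition chi_ld :: "'a set \<Rightarrow> ('a \<Rightarrow> 'a \<Rightarrow> bool) \<Rightarrow> nat" where
  "chi_ld V adj = Min {card (vweight V adj f ` V) | f. local_dist_antimagic V adj f}"

text \<open>Wheel W_m: vertex 0 is the centre, vertices 1..m form the cycle 1-2-...-m-1.\<close>
definition wheel_V :: "nat \<Rightarrow> nat set" where
  "wheel_V m = {0..m}"

definition wheel_adj :: "nat \<Rightarrow> nat \<Rightarrow> nat \<Rightarrow> bool" where
  "wheel_adj m i j \<longleftrightarrow>
     (i = 0 \<and> j \<in> {1..m}) \<or> (j = 0 \<and> i \<in> {1..m}) \<or>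
     (i \<in> {1..m} \<and> j \<in> {1..m} \<and> i \<noteq> j \<and> (j = i mod m + 1 \<or> i = j mod m + 1))"

definition empty_V :: "nat \<Rightarrow> nat set" where
  "empty_V n = {0..<n}"

definition empty_adj :: "nat \<Rightarrow> nat \<Rightarrow> bool" where
  "empty_adj i j \<longleftrightarrow> False"

definition lex_V :: "'a set \<Rightarrow> 'b set \<Rightarrow> ('a \<times> 'b) set" where
  "lex_V VG VH = VG \<times> VH"

definition lex_adj :: "('a \<Rightarrow> 'a \<Rightarrow> bool) \<Rightarrow> ('b \<Rightarrow> 'b \<Rightarrow> bool) \<Rightarrow> 'a \<times> 'b \<Rightarrow> 'a \<times> 'b \<Rightarrow> bool" where
  "lex_adj adjG adjH p q \<longleftrightarrow>
     adjG (fst p) (fst q) \<or> (fst p = fst q \<and> adjH (snd p) (snd q))"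

end

theory Submission
  imports Defs
begin

(* The weight of a copy of wheel vertex i is the sum, over the wheel neighbours j of i, of the
   column sums R j = \<Sum>b. f (j, b).  If R is constant on the odd and on the even rim vertices,
   with different values, then, m being even, adjacent rim vertices get the distinct weights
   R 0 + 2 R 2 and R 0 + 2 R 1, while the centre gets m/2 (R 1 + R 2), which is larger as soon
   as R 0 < 2 R 1, 2 R 2.  So three weights suffice, and a triangle (the centre and two adjacent
   rim vertices) shows that fewer are impossible.
   Such a labelling gives copy a of every wheel vertex a label from the block
   a (m + 1) + 1 .. (a + 1) (m + 1), permuting the wheel vertices within the block; the column
   sums have the required shape when the blocks pair the identity with a parity-preserving
   reversal, plus one triple of blocks if n is odd. *)

lemma triangle_imp_card_vweight_image_ge_3:
  assumes "local_dist_antimagic V adj f"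
    and "u \<in> V" "v \<in> V" "w \<in> V" "adj u v" "adj u w" "adj v w"
  shows "3 \<le> card (vweight V adj f ` V)"
proof -
  let ?w = "vweight V adj f"
  have "finite V"
    using assms(1) unfolding local_dist_antimagic_def
    by (metis bij_betw_finite finite_atLeastAtMost)
  have "?w u \<noteq> ?w v" "?w u \<noteq> ?w w" "?w v \<noteq> ?w w"
    using assms unfolding local_dist_antimagic_def by blast+
  moreover have "card {?w u, ?w v, ?w w} \<le> card (?w ` V)"
    using assms(2-4) \<open>finite V\<close> by (intro card_mono) auto
  ultimately show ?thesis by simp
qed

lemma chi_ld_eqI:
  assumes "finite V" "local_dist_antimagic V adj f" "card (vweight V adj f ` V) = r"
    and "\<And>g. local_dist_antimagic V adj g \<Longrightarrow> r \<le> card (vweight V adj g ` V)"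
  shows "chi_ld V adj = r"
proof -
  let ?S = "{card (vweight V adj g ` V) | g. local_dist_antimagic V adj g}"
  have "?S \<subseteq> {..card V}"
    using card_image_le[OF assms(1)] by auto
  then have "finite ?S" by (rule finite_subset) simp
  then show ?thesis
    unfolding chi_ld_def using assms(2-4) by (intro Min_eqI) auto
qed

lemma sum_alternating:
  "(\<Sum>a<2 * q. if even a then x else y) = of_nat q * (x + y :: 'a :: comm_semiring_1)"
  by (induction q) (simp_all add: algebra_simps)

lemma vweight_lex_empty:
  "vweight (lex_V VG (empty_V n)) (lex_adj adjG empty_adj) f (g, h) =
     (\<Sum>g'\<in>nbhd VG adjG g. \<Sum>b<n. f (g', b))"
proof -
  have "nbhd (lex_V VG (empty_V n)) (lex_adj adjG empty_adj) (g, h) = nbhd VG adjG g \<times> {..<n}"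
    by (auto simp: nbhd_def lex_V_def lex_adj_def empty_V_def empty_adj_def)
  then show ?thesis
    by (simp add: vweight_def sum.cartesian_product)
qed

abbreviation wheel_lex_V :: "nat \<Rightarrow> nat \<Rightarrow> (nat \<times> nat) set" where
  "wheel_lex_V m n \<equiv> lex_V (wheel_V m) (empty_V n)"

abbreviation wheel_lex_adj :: "nat \<Rightarrow> nat \<times> nat \<Rightarrow> nat \<times> nat \<Rightarrow> bool" where
  "wheel_lex_adj m \<equiv> lex_adj (wheel_adj m) empty_adj"

lemma wheel_lex_V_eq: "wheel_lex_V m n = {0..m} \<times> {..<n}"
  by (auto simp: lex_V_def wheel_V_def empty_V_def)

lemma nbhd_wheel_centre: "nbhd (wheel_V m) (wheel_adj m) 0 = {1..m}"
  by (auto simp: nbhd_def wheel_V_def wheel_adj_def)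

lemma nbhd_wheel_rim:
  assumes "m \<ge> 3" "i \<in> {1..m}"
  shows "nbhd (wheel_V m) (wheel_adj m) i =
    {0, if i = 1 then m else i - 1, if i = m then 1 else i + 1}"
proof -
  have mod_rim: "j mod m = (if j = m then 0 else j)" if "j \<in> {1..m}" for j
    using that by auto
  have "j \<in> nbhd (wheel_V m) (wheel_adj m) i \<longleftrightarrow>
      j \<in> {0, if i = 1 then m else i - 1, if i = m then 1 else i + 1}" for j
  proof (cases "j \<in> {1..m}")
    case True
    then show ?thesis
      using assms by (simp add: nbhd_def wheel_V_def wheel_adj_def mod_rim) arith
  next
    case False
    then show ?thesis
      using assms by (auto simp: nbhd_def wheel_V_def wheel_adj_def)
  qed
  then show ?thesis by blast
qed

lemma wheel_adj_rim_parity: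
  assumes "even m" "i \<in> {1..m}" "j \<in> {1..m}" "wheel_adj m i j"
  shows "odd i \<longleftrightarrow> even j"
proof -
  have "j = i mod m + 1 \<or> i = j mod m + 1"
    using assms(2-4) by (auto simp: wheel_adj_def)
  then show ?thesis
    using assms(1-3) by (auto simp: mod_if split: if_splits)
qed

definition block_label :: "nat \<Rightarrow> (nat \<Rightarrow> nat \<Rightarrow> nat) \<Rightarrow> nat \<times> nat \<Rightarrow> nat" where
  "block_label m \<sigma> = (\<lambda>(j, a). a * (m + 1) + \<sigma> a j + 1)"

lemma bij_block_label:
  assumes perm: "\<And>a. a < n \<Longrightarrow> bij_betw (\<sigma> a) {0..m} {0..m}"
  shows "bij_betw (block_label m \<sigma>) ({0..m} \<times> {..<n}) {1..(m + 1) * n}"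
proof -
  have bound: "\<sigma> a j \<le> m" if "j \<le> m" "a < n" for j a
    using perm[OF \<open>a < n\<close>] \<open>j \<le> m\<close> by (auto dest: bij_betwE)
  have inj: "inj_on (block_label m \<sigma>) ({0..m} \<times> {..<n})"
  proof (rule inj_onI, clarsimp)
    fix j a j' a'
    assume ja: "j \<le> m" "a < n" and ja': "j' \<le> m" "a' < n"
      and "block_label m \<sigma> (j, a) = block_label m \<sigma> (j', a')"
    then have eq: "a * (m + 1) + \<sigma> a j = a' * (m + 1) + \<sigma> a' j'"
      by (simp add: block_label_def)
    have "(a * (m + 1) + \<sigma> a j) div (m + 1) = a"
      "(a' * (m + 1) + \<sigma> a' j') div (m + 1) = a'"
      using div_mult_self3[of "m + 1" a "\<sigma> a j"] div_mult_self3[of "m + 1" a' "\<sigma> a' j'"]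
        bound[OF ja] bound[OF ja'] by simp_all
    with eq have "a = a'" "\<sigma> a j = \<sigma> a j'" by simp_all
    moreover have "inj_on (\<sigma> a) {0..m}"
      using perm[OF ja(2)] by (rule bij_betw_imp_inj_on)
    ultimately show "j = j' \<and> a = a'"
      using ja ja' by (auto dest: inj_onD)
  qed
  have "block_label m \<sigma> (j, a) \<in> {1..(m + 1) * n}" if "j \<le> m" "a < n" for j a
  proof -
    have "(a + 1) * (m + 1) \<le> n * (m + 1)"
      using \<open>a < n\<close> by (intro mult_right_mono) auto
    then show ?thesis
      using bound[OF that] by (simp add: block_label_def algebra_simps)
  qed
  then have "block_label m \<sigma> ` ({0..m} \<times> {..<n}) \<subseteq> {1..(m + 1) * n}"
    by auto
  moreover have "card (block_label m \<sigma> ` ({0..m} \<times> {..<n})) = card {1..(m + 1) * n}"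
    using card_image[OF inj] by (simp add: card_cartesian_product)
  ultimately show ?thesis
    using inj by (simp add: bij_betw_def card_subset_eq)
qed

lemma sum_block_label_column:
  "(\<Sum>a<n. block_label m \<sigma> (j, a)) = (\<Sum>a<n. a * (m + 1) + 1) + (\<Sum>a<n. \<sigma> a j)"
  unfolding block_label_def sum.distrib[symmetric] by (rule sum.cong) auto

definition pair_partner :: "nat \<Rightarrow> nat \<Rightarrow> nat" where
  "pair_partner k j = (if j = 0 then 0 else if odd j then 2 * k - j else 2 * k + 2 - j)"

definition triple_partner :: "nat \<Rightarrow> nat \<Rightarrow> nat" where
  "triple_partner k j = (if j = 0 then 0 else if odd j then k - j div 2 else 2 * k + 1 - j div 2)"

lemma le_double_cases:
  fixes j k :: nat
  assumes "j \<le> 2 * k"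
  obtains "j = 0" | t where "t < k" "j = Suc (2 * t)" | t where "t < k" "j = Suc (Suc (2 * t))"
proof (cases "odd j")
  case True
  then show ?thesis using assms that(2)[of "j div 2"] by (auto elim!: oddE)
next
  case False
  then obtain b where "j = 2 * b" by blast
  then show ?thesis using assms that(1) that(3)[of "b - 1"] by (cases "b = 0") auto
qed

lemma pair_partner_simps:
  "pair_partner k 0 = 0"
  "t < k \<Longrightarrow> pair_partner k (Suc (2 * t)) = Suc (2 * (k - 1 - t))"
  "t < k \<Longrightarrow> pair_partner k (Suc (Suc (2 * t))) = Suc (Suc (2 * (k - 1 - t)))"
  by (simp_all add: pair_partner_def)

lemma triple_partner_simps:
  "triple_partner k 0 = 0"
  "triple_partner k (Suc (2 * t)) = k - t"
  "triple_partner k (Suc (Suc (2 * t))) = 2 * k - t"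
  by (simp_all add: triple_partner_def)

lemma bij_betw_pair_partner: "bij_betw (pair_partner k) {0..2 * k} {0..2 * k}"
proof -
  have inj: "inj_on (pair_partner k) {0..2 * k}"
  proof (rule inj_onI)
    fix x y assume "x \<in> {0..2 * k}" "y \<in> {0..2 * k}" "pair_partner k x = pair_partner k y"
    then show "x = y"
      by (auto elim!: le_double_cases simp: pair_partner_simps) presburger+
  qed
  have "pair_partner k ` {0..2 * k} \<subseteq> {0..2 * k}"
    by (auto elim!: le_double_cases simp: pair_partner_simps)
  with inj show ?thesis
    by (simp add: bij_betw_def endo_inj_surj)
qed

lemma bij_betw_triple_partner: "bij_betw (triple_partner k) {0..2 * k} {0..2 * k}"
proof -
  have inj: "inj_on (triple_partner k) {0..2 * k}"
  proof (rule inj_onI)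
    fix x y assume "x \<in> {0..2 * k}" "y \<in> {0..2 * k}" "triple_partner k x = triple_partner k y"
    then show "x = y"
      by (auto elim!: le_double_cases simp: triple_partner_simps)
  qed
  have "triple_partner k ` {0..2 * k} \<subseteq> {0..2 * k}"
    by (auto elim!: le_double_cases simp: triple_partner_simps)
  with inj show ?thesis
    by (simp add: bij_betw_def endo_inj_surj)
qed

lemma add_pair_partner:
  "j \<le> 2 * k \<Longrightarrow> j + pair_partner k j = (if j = 0 then 0 else if odd j then 2 * k else 2 * k + 2)"
  by (auto elim!: le_double_cases simp: pair_partner_simps)

lemma add_triple_partner:
  "j \<le> 2 * k \<Longrightarrow>
     j + 2 * triple_partner k j = (if j = 0 then 0 else if odd j then 2 * k + 1 else 4 * k + 2)"
  by (auto elim!: le_double_cases simp: triple_partner_simps)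

(* Blocks are grouped as pairs (id, pair_partner); for odd n the last two blocks use
   triple_partner, forming a triple (id, triple_partner, triple_partner) with the one before. *)
definition row_perm :: "nat \<Rightarrow> nat \<Rightarrow> nat \<Rightarrow> nat \<Rightarrow> nat" where
  "row_perm n k a =
     (if odd n \<and> n \<le> a + 2 then triple_partner k else if even a then id else pair_partner k)"

lemma bij_betw_row_perm: "bij_betw (row_perm n k a) {0..2 * k} {0..2 * k}"
  using bij_betw_pair_partner bij_betw_triple_partner by (simp add: row_perm_def)

lemma sum_row_perm_column:
  assumes "n \<ge> 2"
  obtains s1 s2 where "s1 \<noteq> s2"
    and "\<And>j. j \<le> 2 * k \<Longrightarrow>
      (\<Sum>a<n. row_perm n k a j) = (if j = 0 then 0 else if odd j then s1 else s2)"
proof (cases "even n")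
  case True
  then obtain q where n: "n = 2 * q" and "q \<ge> 1" using assms by (auto elim!: evenE)
  have "(\<Sum>a<n. row_perm n k a j) = (\<Sum>a<2 * q. if even a then j else pair_partner k j)" for j
    by (rule sum.cong) (auto simp: n row_perm_def)
  then have "(\<Sum>a<n. row_perm n k a j) = q * (j + pair_partner k j)" for j
    by (simp add: sum_alternating)
  with that[of "q * (2 * k)" "q * (2 * k + 2)"] show ?thesis
    using \<open>q \<ge> 1\<close> add_pair_partner by auto
next
  case False
  then have "n = 2 * ((n - 3) div 2) + 3" using assms by presburger
  then obtain q where n: "n = 2 * q + 3" by blast
  have "(\<Sum>a<n. row_perm n k a j) = q * (j + pair_partner k j) + (j + 2 * triple_partner k j)" for j
  proof -
    have "(\<Sum>a<n. row_perm n k a j) = (\<Sum>a<2 * q. row_perm n k a j)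
        + row_perm n k (2 * q) j + row_perm n k (2 * q + 1) j + row_perm n k (2 * q + 2) j"
      by (simp add: n numeral_3_eq_3)
    also have "(\<Sum>a<2 * q. row_perm n k a j) = (\<Sum>a<2 * q. if even a then j else pair_partner k j)"
      by (rule sum.cong) (auto simp: n row_perm_def)
    finally show ?thesis
      by (simp add: sum_alternating n row_perm_def)
  qed
  with that[of "q * (2 * k) + (2 * k + 1)" "q * (2 * k + 2) + (4 * k + 2)"] show ?thesis
    using add_pair_partner add_triple_partner by auto
qed

lemma wheel_lex_lda_three_weights:
  assumes "even m" "m > 3"
    and bij: "bij_betw f (wheel_lex_V m n) {1..card (wheel_lex_V m n)}"
    and col_centre: "(\<Sum>b<n. f (0, b)) = c"
    and col_rim: "\<And>j. j \<in> {1..m} \<Longrightarrow> (\<Sum>b<n. f (j, b)) = (if odd j then r_odd else r_even)"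
    and "r_odd \<noteq> r_even" "c < 2 * r_odd" "c < 2 * r_even"
  shows "local_dist_antimagic (wheel_lex_V m n) (wheel_lex_adj m) f"
    and "card (vweight (wheel_lex_V m n) (wheel_lex_adj m) f ` wheel_lex_V m n) \<le> 3"
proof -
  let ?w = "vweight (wheel_lex_V m n) (wheel_lex_adj m) f"
  define wt :: "nat \<Rightarrow> nat" where
    "wt i = (if i = 0 then m div 2 * (r_odd + r_even)
             else if odd i then c + 2 * r_even else c + 2 * r_odd)" for i
  have weight: "?w (i, a) = wt i" if "i \<le> m" for i a
  proof (cases "i = 0")
    case True
    have "(\<Sum>j\<in>{1..m}. \<Sum>b<n. f (j, b)) = (\<Sum>j\<in>{1..m}. if odd j then r_odd else r_even)"
      using col_rim by (rule sum.cong[OF refl])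
    also have "\<dots> = (\<Sum>a<2 * (m div 2). if even a then r_odd else r_even)"
      using \<open>even m\<close> unfolding One_nat_def sum.atLeast1_atMost_eq by simp
    finally show ?thesis
      using True by (simp add: vweight_lex_empty nbhd_wheel_centre sum_alternating wt_def)
  next
    case False
    define p where "p = (if i = 1 then m else i - 1)"
    define q where "q = (if i = m then 1 else i + 1)"
    have pq: "p \<in> {1..m}" "q \<in> {1..m}" "p \<noteq> q" "odd p \<longleftrightarrow> even i" "odd q \<longleftrightarrow> even i"
      using \<open>even m\<close> \<open>m > 3\<close> False that by (auto simp: p_def q_def)
    have "?w (i, a) = (\<Sum>j\<in>{0, p, q}. \<Sum>b<n. f (j, b))"
      using False that \<open>m > 3\<close> by (simp add: vweight_lex_empty nbhd_wheel_rim p_def q_def)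
    also have "\<dots> = wt i"
      using pq col_centre col_rim[of p] col_rim[of q] False by (simp add: wt_def)
    finally show ?thesis .
  qed
  have wt_adj: "wt i \<noteq> wt j" if "wheel_adj m i j" "i \<le> m" "j \<le> m" for i j
  proof (cases "i = 0 \<or> j = 0")
    case True
    have "m div 2 * (r_odd + r_even) \<ge> 2 * (r_odd + r_even)"
      using \<open>m > 3\<close> by (intro mult_right_mono) auto
    then show ?thesis
      using True that \<open>c < 2 * r_odd\<close> \<open>c < 2 * r_even\<close> by (auto simp: wt_def wheel_adj_def)
  next
    case False
    then have "odd i \<longleftrightarrow> even j"
      using wheel_adj_rim_parity[OF \<open>even m\<close>] that by simp
    then show ?thesis
      using False \<open>r_odd \<noteq> r_even\<close> by (auto simp: wt_def)
  qed
  have vertex: "fst u \<le> m \<and> ?w u = wt (fst u)" if "u \<in> wheel_lex_V m n" for u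
    using that weight[of "fst u" "snd u"] unfolding wheel_lex_V_eq by auto
  show "local_dist_antimagic (wheel_lex_V m n) (wheel_lex_adj m) f"
    unfolding local_dist_antimagic_def
  proof (intro conjI bij ballI impI)
    fix u v
    assume "u \<in> wheel_lex_V m n" "v \<in> wheel_lex_V m n" "wheel_lex_adj m u v"
    then show "?w u \<noteq> ?w v"
      using vertex wt_adj[of "fst u" "fst v"] by (simp add: lex_adj_def empty_adj_def)
  qed
  have "?w ` wheel_lex_V m n \<subseteq> {wt 0, c + 2 * r_even, c + 2 * r_odd}"
    using vertex by (auto simp: wt_def)
  then have "card (?w ` wheel_lex_V m n) \<le> card {wt 0, c + 2 * r_even, c + 2 * r_odd}"
    by (intro card_mono) auto
  also have "\<dots> \<le> 3"
    by (simp add: card_insert_if)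
  finally show "card (?w ` wheel_lex_V m n) \<le> 3" .
qed

lemma wheel_lex_labelling_with_three_weights:
  assumes "n \<ge> 2" "m > 3" "even m"
  obtains f where "local_dist_antimagic (wheel_lex_V m n) (wheel_lex_adj m) f"
    and "card (vweight (wheel_lex_V m n) (wheel_lex_adj m) f ` wheel_lex_V m n) \<le> 3"
proof -
  obtain k where m: "m = 2 * k" using \<open>even m\<close> by blast
  define f where "f = block_label m (row_perm n k)"
  define B where "B = (\<Sum>a<n. a * (m + 1) + 1)"
  obtain s1 s2 where "s1 \<noteq> s2" and row_sum:
    "\<And>j. j \<le> 2 * k \<Longrightarrow>
      (\<Sum>a<n. row_perm n k a j) = (if j = 0 then 0 else if odd j then s1 else s2)"
    using sum_row_perm_column[OF \<open>n \<ge> 2\<close>] by blast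
  have "B > 0"
    using \<open>n \<ge> 2\<close> unfolding B_def by (intro sum_pos) (auto simp: lessThan_empty_iff)
  have bij: "bij_betw f (wheel_lex_V m n) {1..card (wheel_lex_V m n)}"
    using bij_block_label[of n "row_perm n k" m] bij_betw_row_perm
    by (simp add: f_def m wheel_lex_V_eq card_cartesian_product)
  have col_centre: "(\<Sum>b<n. f (0, b)) = B"
    using row_sum[of 0] by (simp add: f_def B_def sum_block_label_column)
  have col_rim: "(\<Sum>b<n. f (j, b)) = (if odd j then B + s1 else B + s2)" if "j \<in> {1..m}" for j
    using row_sum[of j] that by (simp add: f_def B_def sum_block_label_column m)
  have sums: "B + s1 \<noteq> B + s2" "B < 2 * (B + s1)" "B < 2 * (B + s2)"
    using \<open>s1 \<noteq> s2\<close> \<open>B > 0\<close> by simp_all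
  show ?thesis
    using wheel_lex_lda_three_weights[OF \<open>even m\<close> \<open>m > 3\<close> bij col_centre col_rim sums]
    by (rule that)
qed

theorem mainTheorem19:
  fixes n m :: nat
  assumes "n > 1" and "m > 3" and "even m"
  shows "chi_ld (lex_V (wheel_V m) (empty_V n)) (lex_adj (wheel_adj m) empty_adj) = 3"
proof -
  have lower: "3 \<le> card (vweight (wheel_lex_V m n) (wheel_lex_adj m) g ` wheel_lex_V m n)"
    if "local_dist_antimagic (wheel_lex_V m n) (wheel_lex_adj m) g" for g
    using triangle_imp_card_vweight_image_ge_3[OF that, of "(0, 0)" "(1, 0)" "(2, 0)"] assms
    by (auto simp: wheel_lex_V_eq lex_adj_def wheel_adj_def)
  obtain f where lda: "local_dist_antimagic (wheel_lex_V m n) (wheel_lex_adj m) f"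
    and "card (vweight (wheel_lex_V m n) (wheel_lex_adj m) f ` wheel_lex_V m n) \<le> 3"
    using wheel_lex_labelling_with_three_weights[of n m] assms by auto
  show ?thesis
  proof (rule chi_ld_eqI)
    show "finite (wheel_lex_V m n)"
      by (simp add: wheel_lex_V_eq)
    show "card (vweight (wheel_lex_V m n) (wheel_lex_adj m) f ` wheel_lex_V m n) = 3"
      using \<open>card _ \<le> 3\<close> lower[OF lda] by simp
  qed (use lda lower in auto)
qed

end
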